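(* Let $r\ge1$ and $f,g\in \mathrm{M}_r(\mathbb{C})[Z]$. Define $P_f(x,y_1)=\det(y_1I-f(xI))\in\mathbb{C}[x,y_1]$, $P_g(x,y_2)=\det(y_2I-g(xI))\in\mathbb{C}[x,y_2]$, and $$R_{f,g}(y_1,y_2)=\mathrm{Res}_x\left(P_f(x,y_1),P_g(x,y_2)\right),\qquad T_{f,g}(y_1,y_2)=\mathrm{Res}_x\left(P_f(x,y_1),\,y_2-\det(g(xI))\right),$$ both in $\mathbb{C}[y_1,y_2]$, where $\mathrm{Res}_x$ is the resultant with respect to $x$. (i) If every eigenvalue of $f(xI)$ and every eigenvalue of $g(xI)$ are multiplicatively independent functions in $\overline{\mathbb{C}(x)}$, then $R_{f,g}(y_1,y_2)$ has no factor of the form $y_1^iy_2^j-\rho$ or $y_1^i-\rho y_2^j$ with $i,j$ nonnegative integers not both zero and $\rho$ a root of unity. (ii) If every eigenvalue of $f(xI)$ and $\det(g(xI))$ are multiplicatively independent functions in $\overline{\mathbb{C}(x)}$, then $T_{f,g}(y_1,y_2)$ has no factor of the form $y_1^iy_2^j-\rho$ or $y_1^i-\rho y_2^j$ with $i,j$ nonnegative integers not both zero and $\rho$ a root of unity.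
   Context: A matrix polynomial $f\in\mathrm{M}_r(\mathbb{C})[Z]$ is $f(Z)=C_dZ^d+\cdots+C_0$ with $C_i\in\mathrm{M}_r(\mathbb{C})$, $C_d\ne0$, $d\ge1$; $f(xI)=\sum_iC_ix^i$ for a scalar variable $x$, $I$ the identity matrix. Eigenvalues of $f(xI)$ are taken in an algebraic closure $\overline{\mathbb{C}(x)}$ of $\mathbb{C}(x)$. Two functions $h_1,h_2\in\overline{\mathbb{C}(x)}$ are multiplicatively independent if there is no $(k_1,k_2)\in\mathbb{Z}^2\setminus\{(0,0)\}$ with $h_1^{k_1}h_2^{k_2}=1$. *)

theory Defs
  imports "Subresultants.Resultant_Prelim" "Jordan_Normal_Form.Char_Poly"
    "HOL-Computational_Algebra.Fraction_Field"
begin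

text \<open>A matrix polynomial f(Z) = C_d Z^d + ... + C_0 in M_r(C)[Z] is represented by the
  list of its coefficient matrices [C_0, ..., C_d].\<close>
definition matpoly :: "nat \<Rightarrow> complex mat list \<Rightarrow> bool" where
  "matpoly r Cs \<longleftrightarrow> length Cs \<ge> 2 \<and> set Cs \<subseteq> carrier_mat r r \<and> last Cs \<noteq> 0\<^sub>m r r"

definition eval_xI :: "nat \<Rightarrow> complex mat list \<Rightarrow> complex poly mat" where
  "eval_xI r Cs = mat r r (\<lambda>(i,j). \<Sum>k<length Cs. monom ((Cs ! k) $$ (i,j)) k)"

text \<open>Bivariate polynomials C[y1,y2] are represented as complex poly poly:
  outer variable y1, inner variable y2.\<close>
definition Y1 :: "complex poly poly" where "Y1 = [:0, 1:]"
definition Y2 :: "complex poly poly" where "Y2 = [:[:0, 1:]:]"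

text \<open>Embedding of C[x] into C[y1,y2][x] (constants in y1,y2).\<close>
definition lift_x :: "complex poly \<Rightarrow> complex poly poly poly" where
  "lift_x p = map_poly (\<lambda>c. [:[:c:]:]) p"

definition char_in :: "nat \<Rightarrow> complex poly poly \<Rightarrow> complex mat list \<Rightarrow> complex poly poly poly" where
  "char_in r y Cs = det ([:y:] \<cdot>\<^sub>m 1\<^sub>m r - map_mat lift_x (eval_xI r Cs))"

definition R_fg :: "nat \<Rightarrow> complex mat list \<Rightarrow> complex mat list \<Rightarrow> complex poly poly" where
  "R_fg r Fs Gs = resultant (char_in r Y1 Fs) (char_in r Y2 Gs)"

definition T_fg :: "nat \<Rightarrow> complex mat list \<Rightarrow> complex mat list \<Rightarrow> complex poly poly" where
  "T_fg r Fs Gs = resultant (char_in r Y1 Fs) ([:Y2:] - lift_x (det (eval_xI r Gs)))"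

definition root_of_unity :: "complex \<Rightarrow> bool" where
  "root_of_unity \<rho> \<longleftrightarrow> (\<exists>n::nat. n > 0 \<and> \<rho> ^ n = 1)"

definition no_special_factor :: "complex poly poly \<Rightarrow> bool" where
  "no_special_factor P \<longleftrightarrow>
     (\<forall>i j :: nat. \<forall>\<rho>. (i, j) \<noteq> (0, 0) \<and> root_of_unity \<rho> \<longrightarrow>
        \<not> (Y1 ^ i * Y2 ^ j - [:[:\<rho>:]:]) dvd P \<and>
        \<not> (Y1 ^ i - [:[:\<rho>:]:] * Y2 ^ j) dvd P)"

definition mult_indep :: "'a :: field \<Rightarrow> 'a \<Rightarrow> bool" where
  "mult_indep h1 h2 \<longleftrightarrow> \<not> (\<exists>k1 k2 :: int. (k1, k2) \<noteq> (0, 0) \<and> h1 powi k1 * h2 powi k2 = 1)"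

definition field_embedding :: "(complex poly fract \<Rightarrow> 'k :: field) \<Rightarrow> bool" where
  "field_embedding \<phi> \<longleftrightarrow> inj \<phi> \<and> \<phi> 1 = 1 \<and>
     (\<forall>a b. \<phi> (a + b) = \<phi> a + \<phi> b) \<and> (\<forall>a b. \<phi> (a * b) = \<phi> a * \<phi> b)"

text \<open>f(xI) viewed as a matrix over 'k, an algebraically closed field containing C(x).\<close>
definition xI_in :: "(complex poly fract \<Rightarrow> 'k :: field) \<Rightarrow> nat \<Rightarrow> complex mat list \<Rightarrow> 'k mat" where
  "xI_in \<phi> r Cs = map_mat (\<lambda>p. \<phi> (to_fract p)) (eval_xI r Cs)"

end

(*
  Write f(xI) and g(xI) as square matrices M1, M2 over C[x] and P1(x, y) = det (y I - M1(x)),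
  P2(x, y) = det (y I - M2(x)), so that R = Res_x (P1(x, y1), P2(x, y2)).  Suppose a factor S of
  the form y1^i y2^j - rho or y1^i - rho y2^j divides R.  At every zero (a, b) of S at which one
  of the two leading coefficients in x does not vanish, the specialised resultant
  Res_x (P1(x, a), P2(x, b)) vanishes, so a and b are eigenvalues of M1(x0) and M2(x0) for a
  common point x0.  S has infinitely many such zeros and each x0 accounts for only finitely many,
  so this happens at infinitely many x0.  There a^i is a nonzero root of the characteristic
  polynomial of M1(x0)^i and, because S(a, b) = 0, also of the characteristic polynomial of
  M2(x0)^j twisted by y |-> rho / y (resp. y |-> y / rho).  The resultant in y of these two
  polynomials over C[x] therefore has infinitely many roots, hence is zero, and the two
  polynomials have a common root over the algebraic closure of C(x).  This produces eigenvalues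
  lambda of f(xI) and mu of g(xI) with lambda^i mu^j = rho (resp. lambda^i = rho mu^j); raising to
  the order of the root of unity rho contradicts multiplicative independence.  Part (ii) is part
  (i) for the 1 x 1 matrix (det g(xI)).
*)
theory Submission
  imports Defs "Subresultants.Subresultant_Gcd" "HOL-Computational_Algebra.Field_as_Ring"
    "Jordan_Normal_Form.Spectral_Radius"
begin

section \<open>Polynomials evaluated at a square matrix\<close>

definition poly_mat :: "'a :: comm_ring_1 poly \<Rightarrow> 'a mat \<Rightarrow> 'a mat" where
  "poly_mat p A =
     foldr (\<lambda>c M. c \<cdot>\<^sub>m 1\<^sub>m (dim_row A) + A * M) (coeffs p) (0\<^sub>m (dim_row A) (dim_row A))"

lemma poly_mat_carrier [simp]:
  assumes "A \<in> carrier_mat n n"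
  shows "poly_mat p A \<in> carrier_mat n n"
proof -
  have "foldr (\<lambda>c M. c \<cdot>\<^sub>m 1\<^sub>m n + A * M) cs (0\<^sub>m n n) \<in> carrier_mat n n" for cs
    using assms by (induction cs) auto
  then show ?thesis
    using assms unfolding poly_mat_def by auto
qed

lemma poly_mat_dim [simp]:
  assumes "A \<in> carrier_mat n n"
  shows "dim_row (poly_mat p A) = n" and "dim_col (poly_mat p A) = n"
  using poly_mat_carrier[OF assms] by auto

lemma poly_mat_pCons:
  assumes A: "A \<in> carrier_mat n n"
  shows "poly_mat (pCons a p) A = a \<cdot>\<^sub>m 1\<^sub>m n + A * poly_mat p A"
proof (cases "a = 0 \<and> p = 0")
  case True
  then show ?thesis
    using A by (auto simp: poly_mat_def)
next
  case False
  then have "coeffs (pCons a p) = a # coeffs p"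
    by auto
  then show ?thesis
    using A unfolding poly_mat_def by simp
qed

lemma poly_mat_pCons_0:
  assumes A: "A \<in> carrier_mat n n"
  shows "poly_mat (pCons 0 p) A = A * poly_mat p A"
proof -
  have "0 \<cdot>\<^sub>m 1\<^sub>m n + A * poly_mat p A = A * poly_mat p A"
    using A by (intro eq_matI) auto
  then show ?thesis
    using A by (simp add: poly_mat_pCons)
qed

lemma poly_mat_add:
  assumes A: "A \<in> carrier_mat n n"
  shows "poly_mat (p + q) A = poly_mat p A + poly_mat q A"
proof (induction p q rule: poly_induct2)
  case 0
  show ?case
    using A by (simp add: poly_mat_def)
next
  case (pCons a p b q)
  have P: "poly_mat p A \<in> carrier_mat n n" and Q: "poly_mat q A \<in> carrier_mat n n"
    using A by auto
  have "poly_mat (pCons a p + pCons b q) A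
      = (a + b) \<cdot>\<^sub>m 1\<^sub>m n + (A * poly_mat p A + A * poly_mat q A)"
    using A P Q by (simp add: poly_mat_pCons pCons.IH mult_add_distrib_mat[OF A P Q])
  also have "\<dots> = (a \<cdot>\<^sub>m 1\<^sub>m n + A * poly_mat p A) + (b \<cdot>\<^sub>m 1\<^sub>m n + A * poly_mat q A)"
    using A P Q by (intro eq_matI) (auto simp: algebra_simps)
  finally show ?case
    using A by (simp add: poly_mat_pCons)
qed

lemma poly_mat_smult:
  assumes A: "A \<in> carrier_mat n n"
  shows "poly_mat (smult c p) A = c \<cdot>\<^sub>m poly_mat p A"
proof (induction p)
  case 0
  show ?case
    using A by (auto simp: poly_mat_def)
next
  case (pCons a p)
  have P: "poly_mat p A \<in> carrier_mat n n"
    using A by auto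
  have "poly_mat (smult c (pCons a p)) A = (c * a) \<cdot>\<^sub>m 1\<^sub>m n + c \<cdot>\<^sub>m (A * poly_mat p A)"
    using A P by (simp add: poly_mat_pCons pCons.IH mult_smult_distrib[OF A P])
  also have "\<dots> = c \<cdot>\<^sub>m (a \<cdot>\<^sub>m 1\<^sub>m n + A * poly_mat p A)"
    using A P by (intro eq_matI) (auto simp: algebra_simps)
  finally show ?case
    using A by (simp add: poly_mat_pCons)
qed

lemma poly_mat_mult:
  assumes A: "A \<in> carrier_mat n n"
  shows "poly_mat (p * q) A = poly_mat p A * poly_mat q A"
proof (induction p)
  case 0
  show ?case
    using A poly_mat_carrier[OF A, of q] by (simp add: poly_mat_def)
next
  case (pCons a p)
  have P: "poly_mat p A \<in> carrier_mat n n" and Q: "poly_mat q A \<in> carrier_mat n n"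
    using A by auto
  have "poly_mat (pCons a p * q) A = poly_mat (smult a q + pCons 0 (p * q)) A"
    by simp
  also have "\<dots> = a \<cdot>\<^sub>m poly_mat q A + A * (poly_mat p A * poly_mat q A)"
    using A by (simp add: poly_mat_add poly_mat_smult poly_mat_pCons_0 pCons.IH)
  also have "\<dots> = (a \<cdot>\<^sub>m 1\<^sub>m n) * poly_mat q A + (A * poly_mat p A) * poly_mat q A"
    using A P Q by (simp add: mult_smult_assoc_mat[OF one_carrier_mat Q] assoc_mult_mat[OF A P Q])
  also have "\<dots> = (a \<cdot>\<^sub>m 1\<^sub>m n + A * poly_mat p A) * poly_mat q A"
    using A P Q by (intro add_mult_distrib_mat[symmetric]) auto
  finally show ?case
    using A by (simp add: poly_mat_pCons)
qed

lemma poly_mat_const: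
  assumes "A \<in> carrier_mat n n"
  shows "poly_mat [:a:] A = a \<cdot>\<^sub>m 1\<^sub>m n"
  using assms poly_mat_pCons[OF assms, of a 0] by (simp add: poly_mat_def)

lemma poly_mat_1:
  assumes "A \<in> carrier_mat n n"
  shows "poly_mat 1 A = 1\<^sub>m n"
proof -
  have "1 \<cdot>\<^sub>m 1\<^sub>m n = (1\<^sub>m n :: 'a mat)"
    by (intro eq_matI) auto
  then show ?thesis
    using poly_mat_const[OF assms, of 1] by (simp add: pCons_one)
qed

lemma poly_mat_X:
  assumes "A \<in> carrier_mat n n"
  shows "poly_mat [:0, 1:] A = A"
  using assms by (simp add: poly_mat_pCons_0 poly_mat_1)

lemma poly_mat_power:
  assumes "A \<in> carrier_mat n n"
  shows "poly_mat (p ^ k) A = poly_mat p A ^\<^sub>m k"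
  using assms by (induction k) (simp_all add: poly_mat_1 poly_mat_mult power_Suc2 del: power_Suc)

lemma poly_mat_linear:
  assumes "A \<in> carrier_mat n n"
  shows "poly_mat [:- c, 1:] A = char_matrix A c"
proof -
  have "poly_mat [:- c, 1:] A = poly_mat ([:0, 1:] + [:- c:]) A"
    by simp
  also have "\<dots> = A + (- c) \<cdot>\<^sub>m 1\<^sub>m n"
    unfolding poly_mat_add[OF assms] poly_mat_X[OF assms] poly_mat_const[OF assms] ..
  finally show ?thesis
    using assms by (simp add: char_matrix_def)
qed

lemma det_poly_mat_eq_0_imp_eigenvalue_root:
  fixes A :: "'a :: alg_closed_field mat"
  assumes A: "A \<in> carrier_mat n n"
  shows "p \<noteq> 0 \<Longrightarrow> det (poly_mat p A) = 0 \<Longrightarrow> \<exists>c. poly p c = 0 \<and> eigenvalue A c"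
proof (induction "degree p" arbitrary: p rule: less_induct)
  case less
  show ?case
  proof (cases "degree p = 0")
    case True
    then obtain a where "p = [:a:]" and "a \<noteq> 0"
      using less.prems by (metis degree_eq_zeroE pCons_0_0)
    then have "det (poly_mat p A) = a ^ n"
      using A by (simp add: poly_mat_const)
    with \<open>a \<noteq> 0\<close> less.prems show ?thesis
      by simp
  next
    case False
    then obtain c where "poly p c = 0"
      using alg_closed_imp_poly_has_root by blast
    then obtain q where p: "p = [:- c, 1:] * q"
      using poly_eq_0_iff_dvd by blast
    with less.prems have "q \<noteq> 0"
      by auto
    have "det (poly_mat p A) = det (char_matrix A c) * det (poly_mat q A)"
      unfolding p poly_mat_mult[OF A] poly_mat_linear[OF A]
      using A by (intro det_mult) auto
    with less.prems consider "det (char_matrix A c) = 0" | "det (poly_mat q A) = 0"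
      by auto
    then show ?thesis
    proof cases
      case 1
      with \<open>poly p c = 0\<close> show ?thesis
        using eigenvalue_det[OF A] by blast
    next
      case 2
      have "degree q < degree p"
        using \<open>q \<noteq> 0\<close> unfolding p by (subst degree_mult_eq) auto
      from less.hyps[OF this \<open>q \<noteq> 0\<close> 2] show ?thesis
        unfolding p by auto
    qed
  qed
qed

lemma eigenvalue_pow_mat:
  assumes "A \<in> carrier_mat n n" and "eigenvalue A a"
  shows "eigenvalue (A ^\<^sub>m k) (a ^ k)"
  using assms eigenvector_pow[OF assms(1)] unfolding eigenvalue_def eigenvector_def by auto

lemma eigenvalue_exists:
  fixes A :: "'a :: alg_closed_field mat"
  assumes A: "A \<in> carrier_mat n n" and "n > 0"
  obtains c where "eigenvalue A c"
proof -
  have "degree (char_poly A) \<noteq> 0"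
    using degree_monic_char_poly[OF A] \<open>n > 0\<close> by simp
  then obtain c where "poly (char_poly A) c = 0"
    using alg_closed_imp_poly_has_root by blast
  with that show ?thesis
    using eigenvalue_root_char_poly[OF A] by blast
qed

lemma eigenvalue_pow_mat_imp_pow_eigenvalue:
  fixes A :: "'a :: alg_closed_field mat"
  assumes A: "A \<in> carrier_mat n n" and ev: "eigenvalue (A ^\<^sub>m k) \<alpha>"
  shows "\<exists>c. eigenvalue A c \<and> c ^ k = \<alpha>"
proof (cases "k = 0")
  case True
  have "n > 0"
    using eigenvalue_imp_nonzero_dim[OF _ ev] A by auto
  have "det (char_matrix (1\<^sub>m n) \<alpha>) = 0"
    using ev True A eigenvalue_det[of "1\<^sub>m n" n \<alpha>] by simp
  also have "char_matrix (1\<^sub>m n) \<alpha> = (1 - \<alpha>) \<cdot>\<^sub>m 1\<^sub>m n"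
    by (intro eq_matI) (auto simp: char_matrix_def)
  finally have "\<alpha> = 1"
    by simp
  with True \<open>n > 0\<close> show ?thesis
    using eigenvalue_exists[OF A] by (metis power_0)
next
  case False
  define p where "p = [:0, 1:] ^ k + [:- \<alpha>:]"
  have "coeff p k = 1"
    using False coeff_linear_power[of 0 k] by (cases k) (simp_all add: p_def)
  then have "p \<noteq> 0"
    by auto
  have "poly_mat p A = char_matrix (A ^\<^sub>m k) \<alpha>"
    unfolding p_def poly_mat_add[OF A] poly_mat_power[OF A] poly_mat_X[OF A] poly_mat_const[OF A]
    using A by (simp add: char_matrix_def)
  then have "det (poly_mat p A) = 0"
    using eigenvalue_det[of "A ^\<^sub>m k" n \<alpha>] A ev by simp
  from det_poly_mat_eq_0_imp_eigenvalue_root[OF A \<open>p \<noteq> 0\<close> this] show ?thesis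
    by (auto simp: p_def)
qed

section \<open>Resultants under ring homomorphisms\<close>

lemma resultant_sub_coeff_right_eq_0:
  fixes p q :: "'a :: comm_ring_1 poly"
  assumes q: "coeff q n = 0" and n: "n > 0"
  shows "resultant_sub m n p q = coeff p m * resultant_sub m (n - 1) p q"
proof -
  let ?S = "sylvester_mat_sub m n p q"
  have S: "?S \<in> carrier_mat (m + n) (m + n)"
    by auto
  have "det ?S = (\<Sum>i<m + n. ?S $$ (i, 0) * cofactor ?S i 0)"
    using n by (intro laplace_expansion_column[OF S]) auto
  also have "\<dots> = (\<Sum>i\<in>{0}. ?S $$ (i, 0) * cofactor ?S i 0)"
    using q n by (intro sum.mono_neutral_right) (auto simp: sylvester_mat_sub_index)
  also have "\<dots> = coeff p m * det (mat_delete ?S 0 0)"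
    using n by (simp add: sylvester_mat_sub_index cofactor_def)
  also have "mat_delete ?S 0 0 = sylvester_mat_sub m (n - 1) p q"
  proof (rule eq_matI)
    fix i j
    assume "i < dim_row (sylvester_mat_sub m (n - 1) p q)" "j < dim_col (sylvester_mat_sub m (n - 1) p q)"
    with q n show "mat_delete ?S 0 0 $$ (i, j) = sylvester_mat_sub m (n - 1) p q $$ (i, j)"
      by (auto simp: mat_delete_def sylvester_mat_sub_def) (subgoal_tac "i - j = n", simp, arith)
  qed (use n in auto)
  finally show ?thesis
    unfolding resultant_sub_def .
qed

lemma resultant_sub_degree_le_right:
  fixes p q :: "'a :: comm_ring_1 poly"
  assumes "degree q \<le> n"
  shows "resultant_sub (degree p) n p q = lead_coeff p ^ (n - degree q) * resultant p q"
  using assms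
proof (induction n rule: dec_induct)
  case base
  then show ?case
    by (simp add: resultant_sub)
next
  case (step n)
  then have "coeff q (Suc n) = 0"
    by (simp add: coeff_eq_0)
  then have "resultant_sub (degree p) (Suc n) p q = lead_coeff p * resultant_sub (degree p) n p q"
    using resultant_sub_coeff_right_eq_0[of q "Suc n"] by simp
  with step show ?case
    by (simp add: Suc_diff_le)
qed

lemma (in comm_ring_hom) resultant_map_poly_lead_coeff_left:
  assumes lc: "hom (lead_coeff p) \<noteq> 0"
  shows "hom (resultant p q) =
    hom (lead_coeff p) ^ (degree q - degree (map_poly hom q)) * resultant (map_poly hom p) (map_poly hom q)"
proof -
  have deg: "degree (map_poly hom p) = degree p"
    by (rule degree_map_poly) (use lc in auto)
  have "hom (resultant p q) = resultant_sub (degree p) (degree q) (map_poly hom p) (map_poly hom q)"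
    unfolding resultant_sub resultant_sub_def hom_det[symmetric] by (subst sylvester_mat_sub_map) auto
  also have "\<dots> = lead_coeff (map_poly hom p) ^ (degree q - degree (map_poly hom q))
      * resultant (map_poly hom p) (map_poly hom q)"
    using resultant_sub_degree_le_right[of "map_poly hom q" "degree q" "map_poly hom p", OF degree_map_poly_le] deg by simp
  finally show ?thesis
    using lc deg by (simp add: lead_coeff_map_poly_nz)
qed

lemma resultant_map_poly_eq_0_iff:
  fixes h :: "'a :: idom \<Rightarrow> 'b :: idom"
  assumes "comm_ring_hom h" and lc: "h (lead_coeff p) \<noteq> 0 \<or> h (lead_coeff q) \<noteq> 0"
  shows "resultant (map_poly h p) (map_poly h q) = 0 \<longleftrightarrow> h (resultant p q) = 0"
proof -
  interpret comm_ring_hom h by fact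
  from lc consider "h (lead_coeff p) \<noteq> 0" | "h (lead_coeff q) \<noteq> 0"
    by blast
  then show ?thesis
  proof cases
    case 1
    then show ?thesis
      using resultant_map_poly_lead_coeff_left[OF 1, of q] by simp
  next
    case 2
    then show ?thesis
      using resultant_map_poly_lead_coeff_left[OF 2, of p] resultant_swap[of p q]
        resultant_swap[of "map_poly h p" "map_poly h q"] by (simp add: hom_distribs)
  qed
qed

lemma resultant_eq_0_imp_common_root:
  fixes p q :: "'a :: {factorial_ring_gcd, semiring_gcd_mult_normalize} poly"
    and h :: "'a \<Rightarrow> 'b :: alg_closed_field"
  assumes "inj_comm_ring_hom h" and "resultant p q = 0"
  obtains x where "poly (map_poly h p) x = 0" and "poly (map_poly h q) x = 0"
proof -
  interpret inj_comm_ring_hom h by fact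
  interpret map_h: map_poly_inj_comm_ring_hom h ..
  have "degree (map_poly h (gcd p q)) \<noteq> 0"
    using resultant_0_gcd[of p q] assms(2) by simp
  then obtain x where x: "poly (map_poly h (gcd p q)) x = 0"
    using alg_closed_imp_poly_has_root by blast
  then have "[:- x, 1:] dvd map_poly h (gcd p q)"
    using poly_eq_0_iff_dvd by blast
  moreover have "map_poly h (gcd p q) dvd map_poly h p" and "map_poly h (gcd p q) dvd map_poly h q"
    by (intro map_h.hom_dvd; simp)+
  ultimately have "[:- x, 1:] dvd map_poly h p" and "[:- x, 1:] dvd map_poly h q"
    by (blast intro: dvd_trans)+
  with that show thesis
    using poly_eq_0_iff_dvd by blast
qed

lemma common_root_imp_resultant_eq_0:
  fixes p q :: "'a :: field_gcd poly"
  assumes "p \<noteq> 0" and "poly p x = 0" and "poly q x = 0"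
  shows "resultant p q = 0"
proof -
  have "[:- x, 1:] dvd gcd p q"
    using assms(2,3) by (simp add: poly_eq_0_iff_dvd)
  moreover have "gcd p q \<noteq> 0"
    using assms(1) by simp
  ultimately have "degree (gcd p q) \<noteq> 0"
    using dvd_imp_degree_le[of "[:- x, 1:]" "gcd p q"] by simp
  then show ?thesis
    using resultant_0_gcd by blast
qed

section \<open>Bivariate evaluation and the polynomial det (y I - M(x))\<close>

lemma inj_comm_ring_hom_const_poly: "inj_comm_ring_hom (\<lambda>c :: 'a :: comm_ring_1. [:c:])"
  by unfold_locales (auto simp: pCons_one)

definition poly2 :: "'a :: comm_semiring_0 poly poly \<Rightarrow> 'a \<Rightarrow> 'a \<Rightarrow> 'a" where
  "poly2 p a b = poly (map_poly (\<lambda>c. poly c b) p) a"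

lemma comm_ring_hom_poly2: "comm_ring_hom (\<lambda>p :: 'a :: comm_ring_1 poly poly. poly2 p a b)"
proof -
  interpret map_poly_comm_ring_hom "\<lambda>c :: 'a poly. poly c b" ..
  show ?thesis
    unfolding poly2_def by unfold_locales (auto simp: hom_add hom_mult)
qed

lemma poly2_const_poly [simp]: "poly2 [:p:] a b = poly p b"
  by (cases "p = 0") (auto simp: poly2_def)

lemma poly2_map_poly_const_poly [simp]: "poly2 (map_poly (\<lambda>c. [:c:]) p) a b = poly p a"
  unfolding poly2_def by (subst map_poly_map_poly) (simp_all add: o_def)

lemma poly2_const_const [simp]: "poly2 [:[:c:]:] a b = c"
  by simp

lemma poly2_Y [simp]: "poly2 Y1 a b = a" "poly2 Y2 a b = b"
  unfolding Y1_def Y2_def by (auto simp: poly2_def)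

(* det (y I - M(x)) as a polynomial in x whose coefficients are polynomials in y. *)
definition char_poly_x :: "'a :: comm_ring_1 poly mat \<Rightarrow> 'a poly poly" where
  "char_poly_x M = det ([:[:0, 1:]:] \<cdot>\<^sub>m 1\<^sub>m (dim_row M) - map_mat (map_poly (\<lambda>c. [:c:])) M)"

definition char_resultant :: "'a :: comm_ring_1 poly mat \<Rightarrow> 'a poly mat \<Rightarrow> 'a poly poly" where
  "char_resultant M1 M2 =
     resultant (map_poly (map_poly (\<lambda>c. [:c:])) (char_poly_x M1)) (map_poly (\<lambda>p. [:p:]) (char_poly_x M2))"

lemma map_poly_char_poly_x:
  fixes e :: "complex poly \<Rightarrow> complex poly poly"
  assumes "comm_ring_hom e" and e_y: "e [:0, 1:] = y" and e_const: "\<And>c. e [:c:] = [:[:c:]:]"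
    and M: "M \<in> carrier_mat n n"
  shows "map_poly e (char_poly_x M) = det ([:y:] \<cdot>\<^sub>m 1\<^sub>m n - map_mat lift_x M)"
proof -
  interpret e: comm_ring_hom e by fact
  interpret map_e: map_poly_comm_ring_hom e ..
  have lift: "map_poly e (map_poly (\<lambda>c. [:c:]) p) = lift_x p" for p
    unfolding lift_x_def by (subst map_poly_map_poly) (auto simp: o_def e_const)
  show ?thesis
    unfolding char_poly_x_def map_e.hom_det[symmetric] using M
    by (intro arg_cong[of _ _ det] eq_matI) (auto simp: lift e_y[simplified] hom_distribs)
qed

lemma char_in_Y1: "char_in r Y1 Cs = map_poly (map_poly (\<lambda>c. [:c:])) (char_poly_x (eval_xI r Cs))"
proof -
  interpret const: inj_comm_ring_hom "\<lambda>c :: complex. [:c:]"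
    by (rule inj_comm_ring_hom_const_poly)
  interpret map_poly_inj_comm_ring_hom "\<lambda>c :: complex. [:c:]" ..
  show ?thesis
    unfolding char_in_def
    by (rule map_poly_char_poly_x[symmetric])
      (auto simp: Y1_def eval_xI_def comm_ring_hom_axioms Polynomial.map_poly_pCons)
qed

lemma char_in_Y2: "char_in r Y2 Cs = map_poly (\<lambda>p. [:p:]) (char_poly_x (eval_xI r Cs))"
  unfolding char_in_def
  by (rule map_poly_char_poly_x[symmetric])
    (auto simp: Y2_def eval_xI_def inj_comm_ring_hom.axioms(1)[OF inj_comm_ring_hom_const_poly])

lemma poly2_char_poly_x:
  assumes M: "M \<in> carrier_mat n n"
  shows "poly2 (char_poly_x M) x a = poly (char_poly (map_mat (\<lambda>p. poly p x) M)) a"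
proof -
  interpret comm_ring_hom "\<lambda>p. poly2 p x a"
    by (rule comm_ring_hom_poly2)
  have "poly2 (char_poly_x M) x a = det (map_mat (\<lambda>p. poly2 p x a)
      ([:[:0, 1:]:] \<cdot>\<^sub>m 1\<^sub>m n - map_mat (map_poly (\<lambda>c. [:c:])) M))"
    unfolding char_poly_x_def hom_det using M by simp
  also have "\<dots> = det (map_mat (\<lambda>p. poly p a) (char_poly_matrix (map_mat (\<lambda>p. poly p x) M)))"
    using M by (intro arg_cong[of _ _ det] eq_matI) (auto simp: char_poly_matrix_def hom_minus hom_uminus)
  also have "\<dots> = poly (char_poly (map_mat (\<lambda>p. poly p x) M)) a"
    unfolding char_poly_def by (rule comm_ring_hom.hom_det[OF poly_hom.comm_ring_hom_axioms])
  finally show ?thesis .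
qed

lemma eigenvalue_eval_iff_poly2_char_poly_x:
  fixes M :: "'a :: field poly mat"
  assumes "M \<in> carrier_mat n n"
  shows "eigenvalue (map_mat (\<lambda>p. poly p x) M) a \<longleftrightarrow> poly2 (char_poly_x M) x a = 0"
  using assms by (simp add: poly2_char_poly_x eigenvalue_root_char_poly[of _ n])

lemma char_poly_x_nonzero:
  fixes M :: "'a :: {field, ring_char_0} poly mat"
  assumes M: "M \<in> carrier_mat n n"
  shows "char_poly_x M \<noteq> 0"
proof
  assume "char_poly_x M = 0"
  then have "poly (char_poly (map_mat (\<lambda>p. poly p 0) M)) a = 0" for a
    using poly2_char_poly_x[OF M, of 0 a] by (simp add: poly2_def)
  then have "char_poly (map_mat (\<lambda>p. poly p 0) M) = 0"
    using poly_all_0_iff_0 by blast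
  with degree_monic_char_poly[of "map_mat (\<lambda>p. poly p 0) M" n] M show False
    by auto
qed

section \<open>Special factors\<close>

definition special_factor :: "bool \<Rightarrow> nat \<Rightarrow> nat \<Rightarrow> complex \<Rightarrow> complex poly poly" where
  "special_factor prod_form i j \<rho> =
     (if prod_form then Y1 ^ i * Y2 ^ j - [:[:\<rho>:]:] else Y1 ^ i - [:[:\<rho>:]:] * Y2 ^ j)"

definition special_rel :: "bool \<Rightarrow> nat \<Rightarrow> nat \<Rightarrow> 'a :: field \<Rightarrow> 'a \<Rightarrow> 'a \<Rightarrow> bool" where
  "special_rel prod_form i j \<rho> a b \<longleftrightarrow> (if prod_form then a ^ i * b ^ j = \<rho> else a ^ i = \<rho> * b ^ j)"

lemma no_special_factor_iff:
  "no_special_factor P \<longleftrightarrow>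
    (\<forall>prod_form i j \<rho>. (i, j) \<noteq> (0, 0) \<and> root_of_unity \<rho> \<longrightarrow> \<not> special_factor prod_form i j \<rho> dvd P)"
  unfolding no_special_factor_def special_factor_def by (auto simp: all_bool_eq)

lemma poly2_special_factor:
  "poly2 (special_factor prod_form i j \<rho>) a b = 0 \<longleftrightarrow> special_rel prod_form i j \<rho> a b"
proof -
  interpret comm_ring_hom "\<lambda>p. poly2 p a b"
    by (rule comm_ring_hom_poly2)
  have "poly2 (special_factor prod_form i j \<rho>) a b =
      (if prod_form then a ^ i * b ^ j - \<rho> else a ^ i - \<rho> * b ^ j)"
    unfolding special_factor_def
    by (cases prod_form) (simp_all only: if_True if_False hom_minus hom_mult hom_power poly2_Y poly2_const_const)
  then show ?thesis
    unfolding special_rel_def by auto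
qed

lemma special_rel_iff:
  assumes "\<rho> \<noteq> 0" and "a ^ i \<noteq> 0"
  shows "special_rel prod_form i j \<rho> a b \<longleftrightarrow> b ^ j = (if prod_form then \<rho> / a ^ i else a ^ i / \<rho>)"
  using assms unfolding special_rel_def by (auto simp: field_simps)

lemma infinite_special_rel_solutions:
  fixes \<rho> :: "'a :: {alg_closed_field, field_char_0}"
  assumes "finite B1" and "finite B2" and "\<rho> \<noteq> 0" and "(i, j) \<noteq> (0, 0)"
  shows "infinite {(a, b). a \<noteq> 0 \<and> special_rel prod_form i j \<rho> a b \<and> (a \<notin> B1 \<or> b \<notin> B2)}"
    (is "infinite ?G")
proof -
  have cofinite: "infinite (UNIV - B :: 'a set)" if "finite B" for B
    by (rule Diff_infinite_finite[OF that infinite_UNIV_char_0])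
  obtain f and D :: "'a set" where "inj_on f D" and "infinite D" and "f ` D \<subseteq> ?G"
  proof (cases "j = 0")
    case True
    with assms(4) have "i > 0"
      by simp
    then obtain a0 where "a0 ^ i = \<rho>"
      using nth_root_exists[of i \<rho>] by blast
    with \<open>\<rho> \<noteq> 0\<close> \<open>i > 0\<close> have "a0 \<noteq> 0"
      by auto
    show thesis
    proof (rule that[of "\<lambda>b. (a0, b)" "UNIV - insert 0 B2"])
      show "(\<lambda>b. (a0, b)) ` (UNIV - insert 0 B2) \<subseteq> ?G"
        using \<open>a0 ^ i = \<rho>\<close> \<open>a0 \<noteq> 0\<close> True by (auto simp: special_rel_def)
    qed (simp_all add: inj_on_def cofinite[OF assms(2)])
  next
    case False
    define c where "c a = (if prod_form then \<rho> / a ^ i else a ^ i / \<rho>)" for a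
    define root where "root a = (SOME b. b ^ j = c a)" for a
    from False have "j > 0"
      by simp
    have root: "root a ^ j = c a" for a
      unfolding root_def by (rule someI_ex[OF nth_root_exists[OF \<open>j > 0\<close>]])
    show thesis
    proof (rule that[of "\<lambda>a. (a, root a)" "UNIV - insert 0 B1"])
      show "(\<lambda>a. (a, root a)) ` (UNIV - insert 0 B1) \<subseteq> ?G"
        using root \<open>\<rho> \<noteq> 0\<close> by (auto simp: special_rel_iff c_def)
    qed (simp_all add: inj_on_def cofinite[OF assms(1)])
  qed
  then have "infinite (f ` D)"
    using finite_imageD by blast
  then show ?thesis
    using \<open>f ` D \<subseteq> ?G\<close> by (rule infinite_super[rotated])
qed

(* With c = 1 / rho, a nonzero gamma is a root iff p vanishes at rho / gamma (prod_form)
   resp. at gamma / rho. *)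
definition twisted_poly :: "bool \<Rightarrow> 'a :: comm_ring_1 \<Rightarrow> 'a poly \<Rightarrow> 'a poly" where
  "twisted_poly prod_form c p = (if prod_form then reflect_poly p else p) \<circ>\<^sub>p [:0, c:]"

lemma poly_map_poly_twisted_poly:
  fixes h :: "'a :: comm_ring_1 \<Rightarrow> 'b :: field"
  assumes "comm_ring_hom h" and lc: "h (lead_coeff p) \<noteq> 0" and "h c \<noteq> 0" and "\<gamma> \<noteq> 0"
  shows "poly (map_poly h (twisted_poly prod_form c p)) \<gamma> = 0 \<longleftrightarrow>
    poly (map_poly h p) (if prod_form then inverse (h c * \<gamma>) else h c * \<gamma>) = 0"
proof -
  interpret comm_ring_hom h by fact
  have deg: "degree (map_poly h p) = degree p"
    by (rule degree_map_poly) (use lc in auto)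
  have reflect: "map_poly h (reflect_poly p) = reflect_poly (map_poly h p)"
    by (rule poly_eqI) (simp add: coeff_reflect_poly deg coeff_map_poly)
  have "poly (map_poly h (twisted_poly prod_form c p)) \<gamma>
      = poly (map_poly h (if prod_form then reflect_poly p else p)) (h c * \<gamma>)"
    unfolding twisted_poly_def map_poly_pcompose poly_pcompose by (simp add: hom_distribs mult.commute)
  then show ?thesis
    using \<open>h c \<noteq> 0\<close> \<open>\<gamma> \<noteq> 0\<close> by (simp add: reflect poly_reflect_poly_nz)
qed

lemma eigenvalue_pow_mat_map_iff:
  fixes h :: "'a :: comm_ring_1 \<Rightarrow> 'b :: field"
  assumes "comm_ring_hom h" and M: "M \<in> carrier_mat n n"
  shows "eigenvalue (map_mat h M ^\<^sub>m i) \<gamma> \<longleftrightarrow> poly (map_poly h (char_poly (M ^\<^sub>m i))) \<gamma> = 0"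
proof -
  interpret comm_ring_hom h by fact
  have "map_poly h (char_poly (M ^\<^sub>m i)) = char_poly (map_mat h M ^\<^sub>m i)"
    using M by (simp add: char_poly_hom[of _ n] mat_hom_pow[symmetric])
  then show ?thesis
    using M eigenvalue_root_char_poly[of "map_mat h M ^\<^sub>m i" n] by simp
qed

lemma monic_poly_strip_zero_roots:
  fixes p :: "'a :: idom poly"
  assumes "lead_coeff p = 1"
  obtains m q where "p = [:0, 1:] ^ m * q" and "poly q 0 \<noteq> 0" and "lead_coeff q = 1"
proof -
  from assms have "p \<noteq> 0"
    by auto
  from order_decomp[OF this, of 0] obtain m q where p: "p = [:0, 1:] ^ m * q"
    and "\<not> [:0, 1:] dvd q"
    by auto
  then have "poly q 0 \<noteq> 0"
    using poly_eq_0_iff_dvd[of q 0] by simp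
  moreover have "lead_coeff q = 1"
    using assms unfolding p by (simp add: lead_coeff_mult lead_coeff_power)
  ultimately show thesis
    using that p by blast
qed

section \<open>Elimination of x\<close>

lemma special_zero_imp_common_eigenvalue_point:
  fixes M1 M2 :: "complex poly mat"
  assumes M1: "M1 \<in> carrier_mat n1 n1" and M2: "M2 \<in> carrier_mat n2 n2"
    and dvd: "S dvd char_resultant M1 M2" and zero: "poly2 S a b = 0"
    and lc: "poly (lead_coeff (char_poly_x M1)) a \<noteq> 0 \<or> poly (lead_coeff (char_poly_x M2)) b \<noteq> 0"
  obtains x where "eigenvalue (map_mat (\<lambda>p. poly p x) M1) a" and "eigenvalue (map_mat (\<lambda>p. poly p x) M2) b"
proof -
  define P1 P2 where "P1 = char_poly_x M1" and "P2 = char_poly_x M2"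
  let ?h = "\<lambda>p. poly2 p a b"
  interpret h: comm_ring_hom ?h
    by (rule comm_ring_hom_poly2)
  interpret const: inj_comm_ring_hom "\<lambda>c :: complex. [:c:]"
    by (rule inj_comm_ring_hom_const_poly)
  interpret map_const: map_poly_inj_comm_ring_hom "\<lambda>c :: complex. [:c:]" ..
  have R: "char_resultant M1 M2 = resultant (map_poly (map_poly (\<lambda>c. [:c:])) P1) (map_poly (\<lambda>p. [:p:]) P2)"
    unfolding char_resultant_def P1_def P2_def ..
  have "?h (lead_coeff (map_poly (map_poly (\<lambda>c. [:c:])) P1)) \<noteq> 0 \<or>
      ?h (lead_coeff (map_poly (\<lambda>p. [:p:]) P2)) \<noteq> 0"
    using lc unfolding P1_def P2_def by simp
  moreover have "?h (char_resultant M1 M2) = 0"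
    using dvd zero by (auto elim!: dvdE simp: h.hom_mult)
  ultimately have
    "resultant (map_poly ?h (map_poly (map_poly (\<lambda>c. [:c:])) P1)) (map_poly ?h (map_poly (\<lambda>p. [:p:]) P2)) = 0"
    unfolding R by (simp add: resultant_map_poly_eq_0_iff[OF comm_ring_hom_poly2])
  moreover have "map_poly ?h (map_poly (map_poly (\<lambda>c. [:c:])) P1) = map_poly (\<lambda>c. poly c a) P1"
    and "map_poly ?h (map_poly (\<lambda>p. [:p:]) P2) = map_poly (\<lambda>c. poly c b) P2"
    by (subst map_poly_map_poly; simp add: o_def)+
  moreover have "inj_comm_ring_hom (\<lambda>x :: complex. x)"
    by unfold_locales auto
  ultimately obtain x where "poly (map_poly (\<lambda>c. poly c a) P1) x = 0"
    and "poly (map_poly (\<lambda>c. poly c b) P2) x = 0"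
    using resultant_eq_0_imp_common_root[of "\<lambda>x. x", unfolded map_poly_id'] by metis
  with that show thesis
    unfolding P1_def P2_def using eigenvalue_eval_iff_poly2_char_poly_x[OF M1] eigenvalue_eval_iff_poly2_char_poly_x[OF M2]
    by (simp add: poly2_def)
qed

lemma eigenvalues_at_imp_root_elimination_resultant:
  fixes M1 M2 :: "complex poly mat"
  assumes M1: "M1 \<in> carrier_mat n1 n1" and M2: "M2 \<in> carrier_mat n2 n2" and "\<rho> \<noteq> 0"
    and pA: "char_poly (M1 ^\<^sub>m i) = [:0, 1:] ^ m * pA0" and lc: "lead_coeff pA0 = 1"
    and ea: "eigenvalue (map_mat (\<lambda>p. poly p x) M1) a" and eb: "eigenvalue (map_mat (\<lambda>p. poly p x) M2) b"
    and "a \<noteq> 0" and rel: "special_rel prod_form i j \<rho> a b"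
  shows "poly (resultant pA0 (twisted_poly prod_form [:inverse \<rho>:] (char_poly (M2 ^\<^sub>m j)))) x = 0"
proof -
  let ?h = "\<lambda>p. poly p x" and ?pB = "char_poly (M2 ^\<^sub>m j)"
  let ?Q = "twisted_poly prod_form [:inverse \<rho>:] ?pB"
  note hom = poly_hom.comm_ring_hom_axioms[of x]
  interpret h: comm_ring_hom ?h
    by (rule hom)
  interpret map_h: map_poly_comm_ring_hom ?h ..
  have "eigenvalue (map_mat ?h M1 ^\<^sub>m i) (a ^ i)"
    using M1 ea by (intro eigenvalue_pow_mat[of _ n1]) auto
  then have "poly (map_poly ?h ([:0, 1:] ^ m * pA0)) (a ^ i) = 0"
    using eigenvalue_pow_mat_map_iff[OF hom M1] pA by simp
  then have rootA: "poly (map_poly ?h pA0) (a ^ i) = 0"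
    using \<open>a \<noteq> 0\<close> by (simp add: hom_distribs poly_power)
  have "eigenvalue (map_mat ?h M2 ^\<^sub>m j) (b ^ j)"
    using M2 eb by (intro eigenvalue_pow_mat[of _ n2]) auto
  then have "poly (map_poly ?h ?pB) (b ^ j) = 0"
    using eigenvalue_pow_mat_map_iff[OF hom M2] by simp
  moreover have "b ^ j = (if prod_form then \<rho> / a ^ i else a ^ i / \<rho>)"
    using special_rel_iff[of \<rho> a i prod_form j b] rel \<open>\<rho> \<noteq> 0\<close> \<open>a \<noteq> 0\<close> by simp
  moreover have "(if prod_form then \<rho> / a ^ i else a ^ i / \<rho>) =
      (if prod_form then inverse (?h [:inverse \<rho>:] * a ^ i) else ?h [:inverse \<rho>:] * a ^ i)"
    using \<open>\<rho> \<noteq> 0\<close> \<open>a \<noteq> 0\<close> by (simp add: field_simps)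
  moreover have "lead_coeff ?pB = 1"
    using degree_monic_char_poly[of "M2 ^\<^sub>m j" n2] M2 by auto
  ultimately have rootQ: "poly (map_poly ?h ?Q) (a ^ i) = 0"
    using poly_map_poly_twisted_poly[OF hom, of ?pB "[:inverse \<rho>:]" "a ^ i" prod_form]
      \<open>\<rho> \<noteq> 0\<close> \<open>a \<noteq> 0\<close> by simp
  have "lead_coeff (map_poly ?h pA0) = 1"
    using lead_coeff_map_poly_nz[of ?h pA0] lc by simp
  then have "map_poly ?h pA0 \<noteq> 0"
    by (metis leading_coeff_0_iff zero_neq_one)
  then have "resultant (map_poly ?h pA0) (map_poly ?h ?Q) = 0"
    using rootA rootQ by (rule common_root_imp_resultant_eq_0)
  then show ?thesis
    using resultant_map_poly_eq_0_iff[OF hom, of pA0 ?Q] lc by simp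
qed

lemma special_factor_dvd_imp_elimination_resultant_eq_0:
  fixes M1 M2 :: "complex poly mat"
  assumes M1: "M1 \<in> carrier_mat n1 n1" and M2: "M2 \<in> carrier_mat n2 n2"
    and dvd: "special_factor prod_form i j \<rho> dvd char_resultant M1 M2"
    and "\<rho> \<noteq> 0" and "(i, j) \<noteq> (0, 0)"
    and pA: "char_poly (M1 ^\<^sub>m i) = [:0, 1:] ^ m * pA0" and lc: "lead_coeff pA0 = 1"
  shows "resultant pA0 (twisted_poly prod_form [:inverse \<rho>:] (char_poly (M2 ^\<^sub>m j))) = 0"
    (is "?E = 0")
proof (rule ccontr)
  assume "?E \<noteq> 0"
  define B1 where "B1 = {a. poly (lead_coeff (char_poly_x M1)) a = 0}"
  define B2 where "B2 = {b. poly (lead_coeff (char_poly_x M2)) b = 0}"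
  have "finite B1" and "finite B2"
    unfolding B1_def B2_def using char_poly_x_nonzero[OF M1] char_poly_x_nonzero[OF M2]
    by (auto intro!: poly_roots_finite)
  define G where "G = {(a, b). a \<noteq> 0 \<and> special_rel prod_form i j \<rho> a b \<and> (a \<notin> B1 \<or> b \<notin> B2)}"
  have "infinite G"
    unfolding G_def by (rule infinite_special_rel_solutions) fact+
  moreover have "G \<subseteq> (\<Union>x \<in> {x. poly ?E x = 0}.
      Collect (eigenvalue (map_mat (\<lambda>p. poly p x) M1)) \<times> Collect (eigenvalue (map_mat (\<lambda>p. poly p x) M2)))"
    (is "_ \<subseteq> ?U")
  proof
    fix g
    assume "g \<in> G"
    then obtain a b where g: "g = (a, b)" and "a \<noteq> 0" and rel: "special_rel prod_form i j \<rho> a b"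
      and "a \<notin> B1 \<or> b \<notin> B2"
      by (auto simp: G_def)
    then have "poly (lead_coeff (char_poly_x M1)) a \<noteq> 0 \<or> poly (lead_coeff (char_poly_x M2)) b \<noteq> 0"
      by (auto simp: B1_def B2_def)
    moreover have "poly2 (special_factor prod_form i j \<rho>) a b = 0"
      using rel by (simp add: poly2_special_factor)
    ultimately obtain x where ea: "eigenvalue (map_mat (\<lambda>p. poly p x) M1) a"
      and eb: "eigenvalue (map_mat (\<lambda>p. poly p x) M2) b"
      using special_zero_imp_common_eigenvalue_point[OF M1 M2 dvd] by blast
    moreover have "poly ?E x = 0"
      by (rule eigenvalues_at_imp_root_elimination_resultant[OF M1 M2 \<open>\<rho> \<noteq> 0\<close> pA lc ea eb \<open>a \<noteq> 0\<close> rel])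
    ultimately show "g \<in> ?U"
      unfolding g by blast
  qed
  moreover have "finite (Collect (eigenvalue (map_mat (\<lambda>p. poly p x) M)))"
    if "M \<in> carrier_mat n n" for M :: "complex poly mat" and n x
    using card_finite_spectrum(1)[of "map_mat (\<lambda>p. poly p x) M" n] that by (simp add: spectrum_def)
  then have "finite ?U"
    using poly_roots_finite[OF \<open>?E \<noteq> 0\<close>] M1 M2 by blast
  ultimately show False
    using finite_subset by blast
qed

lemma elimination_resultant_eq_0_imp_special_rel_eigenvalues:
  fixes M1 M2 :: "complex poly mat" and \<psi> :: "complex poly \<Rightarrow> 'k :: alg_closed_field"
  assumes \<psi>: "inj_comm_ring_hom \<psi>"
    and M1: "M1 \<in> carrier_mat n1 n1" and M2: "M2 \<in> carrier_mat n2 n2" and "\<rho> \<noteq> 0"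
    and pA: "char_poly (M1 ^\<^sub>m i) = [:0, 1:] ^ m * pA0" and "poly pA0 0 \<noteq> 0"
    and E: "resultant pA0 (twisted_poly prod_form [:inverse \<rho>:] (char_poly (M2 ^\<^sub>m j))) = 0"
  obtains la mu where "eigenvalue (map_mat \<psi> M1) la" and "eigenvalue (map_mat \<psi> M2) mu"
    and "mu ^ j \<noteq> 0" and "special_rel prod_form i j (\<psi> [:\<rho>:]) la mu"
proof -
  interpret \<psi>: inj_comm_ring_hom \<psi>
    by fact
  interpret map_\<psi>: map_poly_inj_comm_ring_hom \<psi> ..
  let ?pB = "char_poly (M2 ^\<^sub>m j)"
  let ?Q = "twisted_poly prod_form [:inverse \<rho>:] ?pB"
  obtain \<gamma> where rootA: "poly (map_poly \<psi> pA0) \<gamma> = 0" and rootQ: "poly (map_poly \<psi> ?Q) \<gamma> = 0"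
    using resultant_eq_0_imp_common_root[OF \<psi> E] by blast
  have "\<gamma> \<noteq> 0"
    using rootA \<open>poly pA0 0 \<noteq> 0\<close> by auto
  have "poly (map_poly \<psi> (char_poly (M1 ^\<^sub>m i))) \<gamma> = 0"
    unfolding pA using rootA by (simp add: hom_distribs)
  then have "eigenvalue (map_mat \<psi> M1 ^\<^sub>m i) \<gamma>"
    using eigenvalue_pow_mat_map_iff[OF \<psi>.comm_ring_hom_axioms M1] by simp
  then obtain la where la: "eigenvalue (map_mat \<psi> M1) la" and "la ^ i = \<gamma>"
    using eigenvalue_pow_mat_imp_pow_eigenvalue[of "map_mat \<psi> M1" n1] M1 by auto
  have "\<psi> [:inverse \<rho>:] * \<psi> [:\<rho>:] = 1"
    using \<open>\<rho> \<noteq> 0\<close> by (simp flip: \<psi>.hom_mult add: pCons_one)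
  then have inv: "\<psi> [:inverse \<rho>:] = inverse (\<psi> [:\<rho>:])"
    by (metis inverse_unique mult.commute)
  define \<beta> where "\<beta> = (if prod_form then \<psi> [:\<rho>:] / \<gamma> else \<gamma> / \<psi> [:\<rho>:])"
  have "\<beta> \<noteq> 0"
    using \<open>\<gamma> \<noteq> 0\<close> \<open>\<rho> \<noteq> 0\<close> by (simp add: \<beta>_def)
  have "lead_coeff ?pB = 1"
    using degree_monic_char_poly[of "M2 ^\<^sub>m j" n2] M2 by auto
  moreover have "\<beta> = (if prod_form then inverse (\<psi> [:inverse \<rho>:] * \<gamma>) else \<psi> [:inverse \<rho>:] * \<gamma>)"
    using \<open>\<rho> \<noteq> 0\<close> unfolding \<beta>_def inv by (simp add: field_simps)
  ultimately have "poly (map_poly \<psi> ?pB) \<beta> = 0"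
    using poly_map_poly_twisted_poly[OF \<psi>.comm_ring_hom_axioms, of ?pB "[:inverse \<rho>:]" \<gamma> prod_form]
      rootQ \<open>\<gamma> \<noteq> 0\<close> \<open>\<rho> \<noteq> 0\<close> by simp
  then have "eigenvalue (map_mat \<psi> M2 ^\<^sub>m j) \<beta>"
    using eigenvalue_pow_mat_map_iff[OF \<psi>.comm_ring_hom_axioms M2] by simp
  then obtain mu where mu: "eigenvalue (map_mat \<psi> M2) mu" and "mu ^ j = \<beta>"
    using eigenvalue_pow_mat_imp_pow_eigenvalue[of "map_mat \<psi> M2" n2] M2 by auto
  have "special_rel prod_form i j (\<psi> [:\<rho>:]) la mu"
    using special_rel_iff[of "\<psi> [:\<rho>:]" la i prod_form j mu] \<open>la ^ i = \<gamma>\<close> \<open>mu ^ j = \<beta>\<close>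
      \<open>\<gamma> \<noteq> 0\<close> \<open>\<rho> \<noteq> 0\<close> by (simp add: \<beta>_def)
  with la mu \<open>mu ^ j = \<beta>\<close> \<open>\<beta> \<noteq> 0\<close> that show thesis
    by blast
qed

lemma special_rel_root_of_unity_imp_not_mult_indep:
  fixes la mu r :: "'a :: field"
  assumes "N > 0" and "r ^ N = 1" and "(i, j) \<noteq> (0, 0)" and "mu ^ j \<noteq> 0"
    and rel: "special_rel prod_form i j r la mu"
  shows "\<not> mult_indep la mu"
proof -
  define s :: int where "s = (if prod_form then 1 else -1)"
  have "la ^ (i * N) * mu ^ (j * N) = 1" if prod_form
    using rel that \<open>r ^ N = 1\<close> by (simp add: special_rel_def power_mult power_mult_distrib[symmetric])
  moreover have "la ^ (i * N) = mu ^ (j * N)" if "\<not> prod_form"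
    using rel that \<open>r ^ N = 1\<close> by (simp add: special_rel_def power_mult power_mult_distrib)
  moreover have "mu ^ (j * N) \<noteq> 0"
    using \<open>mu ^ j \<noteq> 0\<close> by (simp add: power_mult)
  ultimately have "la powi int (i * N) * mu powi (s * int (j * N)) = 1"
    by (auto simp: s_def power_int_minus field_simps simp del: of_nat_mult)
  moreover have "(int (i * N), s * int (j * N)) \<noteq> (0, 0)"
    using \<open>N > 0\<close> \<open>(i, j) \<noteq> (0, 0)\<close> by (auto simp: s_def)
  ultimately show ?thesis
    unfolding mult_indep_def by blast
qed

theorem no_special_factor_char_resultant:
  fixes M1 M2 :: "complex poly mat" and \<psi> :: "complex poly \<Rightarrow> 'k :: alg_closed_field"
  assumes \<psi>: "inj_comm_ring_hom \<psi>"
    and M1: "M1 \<in> carrier_mat n1 n1" and M2: "M2 \<in> carrier_mat n2 n2"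
    and indep: "\<And>h1 h2. eigenvalue (map_mat \<psi> M1) h1 \<Longrightarrow> eigenvalue (map_mat \<psi> M2) h2 \<Longrightarrow>
      mult_indep h1 h2"
  shows "no_special_factor (char_resultant M1 M2)"
  unfolding no_special_factor_iff
proof (intro allI impI notI, elim conjE)
  fix prod_form i j \<rho>
  assume ij: "(i, j) \<noteq> (0, 0)" and "root_of_unity \<rho>"
    and dvd: "special_factor prod_form i j \<rho> dvd char_resultant M1 M2"
  interpret \<psi>: inj_comm_ring_hom \<psi>
    by fact
  from \<open>root_of_unity \<rho>\<close> obtain N where "N > 0" and "\<rho> ^ N = 1"
    unfolding root_of_unity_def by blast
  then have "\<rho> \<noteq> 0"
    by (metis power_0_left zero_neq_one not_gr0)
  have "lead_coeff (char_poly (M1 ^\<^sub>m i)) = 1"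
    using degree_monic_char_poly[of "M1 ^\<^sub>m i" n1] M1 by auto
  \<comment> \<open>Zero roots are split off: since 0 powi k = 0 for k \<noteq> 0, a relation involving the
    eigenvalue 0 would not contradict multiplicative independence.\<close>
  then obtain m pA0 where pA: "char_poly (M1 ^\<^sub>m i) = [:0, 1:] ^ m * pA0"
    and "poly pA0 0 \<noteq> 0" and "lead_coeff pA0 = 1"
    by (rule monic_poly_strip_zero_roots)
  have "resultant pA0 (twisted_poly prod_form [:inverse \<rho>:] (char_poly (M2 ^\<^sub>m j))) = 0"
    by (rule special_factor_dvd_imp_elimination_resultant_eq_0[OF M1 M2 dvd \<open>\<rho> \<noteq> 0\<close> ij pA])
      fact
  then obtain la mu where "eigenvalue (map_mat \<psi> M1) la" and "eigenvalue (map_mat \<psi> M2) mu"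
    and "mu ^ j \<noteq> 0" and rel: "special_rel prod_form i j (\<psi> [:\<rho>:]) la mu"
    by (rule elimination_resultant_eq_0_imp_special_rel_eigenvalues
        [OF \<psi> M1 M2 \<open>\<rho> \<noteq> 0\<close> pA \<open>poly pA0 0 \<noteq> 0\<close>])
  moreover have "\<psi> [:\<rho>:] ^ N = 1"
    using \<open>\<rho> ^ N = 1\<close> by (simp add: poly_const_pow pCons_one flip: \<psi>.hom_power)
  ultimately have "\<not> mult_indep la mu"
    using special_rel_root_of_unity_imp_not_mult_indep[OF \<open>N > 0\<close> _ ij] by blast
  with indep show False
    using \<open>eigenvalue (map_mat \<psi> M1) la\<close> \<open>eigenvalue (map_mat \<psi> M2) mu\<close> by blast
qed

lemma inj_comm_ring_hom_field_embedding:
  fixes \<phi> :: "complex poly fract \<Rightarrow> 'k :: field"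
  assumes "field_embedding \<phi>"
  shows "inj_comm_ring_hom (\<lambda>p. \<phi> (to_fract p))"
proof -
  from assms have inj: "inj \<phi>" and one: "\<phi> 1 = 1" and add: "\<And>a b. \<phi> (a + b) = \<phi> a + \<phi> b"
    and mult: "\<And>a b. \<phi> (a * b) = \<phi> a * \<phi> b"
    unfolding field_embedding_def by auto
  have zero: "\<phi> 0 = 0"
    using add[of 0 0] by (metis add_0 add_cancel_right_right)
  have "p = q" if "\<phi> (to_fract p) = \<phi> (to_fract q)" for p q
    using injD[OF inj that] by simp
  then show ?thesis
    by unfold_locales (auto simp: add mult one zero)
qed

lemma eigenvalue_map_mat_1_1:
  fixes h :: "'a :: zero \<Rightarrow> 'b :: field"
  assumes "eigenvalue (map_mat h (mat 1 1 (\<lambda>_. d))) e"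
  shows "e = h d"
proof -
  have "map_mat h (mat 1 1 (\<lambda>_. d)) = mat 1 1 (\<lambda>_. h d)"
    by auto
  moreover have "mat 1 1 (\<lambda>_. h d) \<in> carrier_mat 1 1"
    by simp
  ultimately have "det (char_matrix (mat 1 1 (\<lambda>_. h d)) e) = 0"
    using assms eigenvalue_det by metis
  moreover have "det (char_matrix (mat 1 1 (\<lambda>_. h d)) e) = h d - e"
    by (subst det_single) (auto simp: char_matrix_def)
  ultimately show ?thesis
    by simp
qed

lemma R_fg_eq_char_resultant:
  "R_fg r Fs Gs = char_resultant (eval_xI r Fs) (eval_xI r Gs)"
  unfolding R_fg_def char_resultant_def char_in_Y1 char_in_Y2 ..

lemma T_fg_eq_char_resultant:
  "T_fg r Fs Gs = char_resultant (eval_xI r Fs) (mat 1 1 (\<lambda>_. det (eval_xI r Gs)))"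
proof -
  have "map_poly (\<lambda>p. [:p:]) (char_poly_x (mat 1 1 (\<lambda>_. det (eval_xI r Gs))))
      = det ([:Y2:] \<cdot>\<^sub>m 1\<^sub>m 1 - map_mat lift_x (mat 1 1 (\<lambda>_. det (eval_xI r Gs))))"
    by (rule map_poly_char_poly_x)
      (auto simp: Y2_def inj_comm_ring_hom.axioms(1)[OF inj_comm_ring_hom_const_poly])
  also have "\<dots> = [:Y2:] - lift_x (det (eval_xI r Gs))"
    by (subst det_single) auto
  finally show ?thesis
    unfolding T_fg_def char_resultant_def char_in_Y1 by simp
qed

theorem lemma2p1:
  fixes r :: nat and Fs Gs :: "complex mat list"
    and \<phi> :: "complex poly fract \<Rightarrow> 'k :: alg_closed_field"
  assumes "r \<ge> 1" and "matpoly r Fs" and "matpoly r Gs"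
    and "field_embedding \<phi>"
  shows "((\<forall>h1 h2. eigenvalue (xI_in \<phi> r Fs) h1 \<and> eigenvalue (xI_in \<phi> r Gs) h2
              \<longrightarrow> mult_indep h1 h2)
           \<longrightarrow> no_special_factor (R_fg r Fs Gs))
       \<and> ((\<forall>h1. eigenvalue (xI_in \<phi> r Fs) h1 \<longrightarrow> mult_indep h1 (det (xI_in \<phi> r Gs)))
           \<longrightarrow> no_special_factor (T_fg r Fs Gs))"
proof -
  define \<psi> where "\<psi> = (\<lambda>p. \<phi> (to_fract p))"
  have \<psi>: "inj_comm_ring_hom \<psi>"
    unfolding \<psi>_def by (rule inj_comm_ring_hom_field_embedding) fact
  have M: "eval_xI r Cs \<in> carrier_mat r r" for Cs
    unfolding eval_xI_def by simp
  have xI: "xI_in \<phi> r Cs = map_mat \<psi> (eval_xI r Cs)" for Cs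
    unfolding xI_in_def \<psi>_def ..
  interpret \<psi>: inj_comm_ring_hom \<psi>
    by (rule \<psi>)
  have det_xI: "det (map_mat \<psi> (eval_xI r Gs)) = \<psi> (det (eval_xI r Gs))"
    by (metis \<psi>.hom_det)
  show ?thesis
    unfolding R_fg_eq_char_resultant T_fg_eq_char_resultant xI det_xI
    using no_special_factor_char_resultant[OF \<psi> M M, of Fs Gs]
      no_special_factor_char_resultant[OF \<psi> M mat_carrier[of 1 1 "\<lambda>_. det (eval_xI r Gs)"], of Fs]
      eigenvalue_map_mat_1_1 by auto
qed

end
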